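(* Let $f\in C^1([0,1],\mathbb{R})$ satisfy $f(0)=f(1)=0$, $f(s)>0$ for all $s\in(0,1)$, $f'(1)<0$, and suppose there exist $s_0\in(0,1)$, $K\ge 0$, $\alpha>0$ and $r>0$ such that $f(s)\le r\frac{s}{(1+|\ln s|)^\alpha}$ for all $s\in(0,1)$ and $f(s)\ge r\frac{s}{(1+|\ln s|)^\alpha}(1-Ks)$ for all $s\in(0,s_0]$. Let $u_0:\mathbb{R}\to[0,1]$ be uniformly continuous with $u_0>0$ on $\mathbb{R}$, $\liminf_{x\to-\infty}u_0>0$, $\lim_{x\to+\infty}u_0=0$, of class $C^2$ and nonincreasing on $[\xi_0,+\infty)$ for some $\xi_0>0$, and such that $\varphi_0:=-\ln u_0$ satisfies $\varphi_0'=o(\varphi_0^{-\alpha})$ and $\varphi_0''=o(\varphi_0')$ as $x\to+\infty$. Fix $\varepsilon>0$, let $\rho:=r+\frac{\varepsilon}{2}$, and define $$w(t,x):=\exp\Big\{1-\big[(1+\varphi_0(x))^{\alpha+1}-\rho(\alpha+1)t\big]^{\frac{1}{\alpha+1}}\Big\},\qquad x_0(t):=\sup\Big\{x: u_0(x)=\exp\big(1-(\rho(\alpha+1)t+1)^{\frac{1}{\alpha+1}}\big)\Big\}.$$ Let $t^\#>0$ be a time such that $|w_{xx}(t,x)|<\frac{\varepsilon}{2}\frac{w(t,x)}{(1-\ln w(t,x))^\alpha}$ for all $x\ge x_0(t)$, $t\ge t^\#$ (such a time exists). Define $m(t,x):=w(t+t^\#,x)$ for $x\ge x_0(t+t^\#)$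 and $m(t,x):=1$ for $x<x_0(t+t^\#)$. Then $m$ is a supersolution of $u_t=u_{xx}+f(u)$ for all $t>0$ and $x\in\mathbb{R}$, i.e. $m_t-m_{xx}-f(m)\ge0$ on each of the regions $\{x<x_0(t+t^\#)\}$ and $\{x\ge x_0(t+t^\#)\}$.
   Context: $0<m\le 1$; $w$ solves $w_t=\rho\,w/(1-\ln w)^\alpha$ with $w(0,\cdot)=u_0$ and $w(t,x_0(t))=1$. *)

theory Defs
  imports "HOL-Analysis.Analysis" "HOL-Library.Landau_Symbols"
begin

definition has_second_deriv :: "(real \<Rightarrow> real) \<Rightarrow> real \<Rightarrow> real \<Rightarrow> bool" where
  "has_second_deriv g g2 x \<longleftrightarrow>
     (\<exists>d. (\<forall>\<^sub>F y in nhds x. (g has_real_derivative d y) (at y)) \<and>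
          (d has_real_derivative g2) (at x))"

definition supersol_at :: "(real \<Rightarrow> real) \<Rightarrow> (real \<Rightarrow> real \<Rightarrow> real) \<Rightarrow> real \<Rightarrow> real \<Rightarrow> bool" where
  "supersol_at f v t x \<longleftrightarrow>
     (\<exists>vt vxx. ((\<lambda>s. v s x) has_real_derivative vt) (at t) \<and>
              has_second_deriv (\<lambda>y. v t y) vxx x \<and>
              vt - vxx - f (v t x) \<ge> 0)"

end

theory Submission
  imports Defs
begin

text \<open>Write T = t + t# and A(T,x) = (1 + \<phi>0 x)^(\<alpha>+1) - \<rho>(\<alpha>+1)T, so that
  w T x = exp (1 - B) with B = A^(1/(\<alpha>+1)). To the right of x0 T the initial datum lies below
  the level that defines x0 T, which gives A \<ge> 1; hence w \<le> 1 and 1 - ln w = B. Differentiating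
  in time gives exactly w_t = \<rho> w / B^\<alpha>, whereas f(w) \<le> r w / B^\<alpha> by the upper bound on f
  and |w_xx| < \<epsilon>/2 w / B^\<alpha> by the choice of t#; as \<rho> = r + \<epsilon>/2 these balance. To the
  left of x0 T the constant 1 is a stationary solution since f 1 = 0. The regularity of f and
  u0 and the lower bound on f only serve to produce t#, which is assumed here.\<close>

lemma supersol_at_const:
  assumes "f c \<le> 0"
  shows "supersol_at f (\<lambda>s y. c) t x"
  unfolding supersol_at_def has_second_deriv_def
  using assms by (intro exI[of _ 0]) (auto intro!: exI[of _ "\<lambda>_. 0"])

text \<open>Holds even when the level set is empty and its Sup is a junk value.\<close>
lemma le_level_beyond_Sup_level_set:
  fixes u :: "real \<Rightarrow> real"
  assumes cont: "continuous_on UNIV u" and lim: "(u \<longlongrightarrow> 0) at_top"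
    and c: "c > 0" and x: "Sup {y. u y = c} \<le> x"
  shows "u x \<le> c"
proof (rule ccontr)
  assume "\<not> u x \<le> c"
  obtain N where N: "\<And>y. y \<ge> N \<Longrightarrow> u y < c"
    using order_tendstoD(2)[OF lim c] by (auto simp: eventually_at_top_linorder)
  have "u (max N x) \<le> c" "c \<le> u x" "x \<le> max N x"
    using N[of "max N x"] \<open>\<not> u x \<le> c\<close> by auto
  then obtain z where z: "x \<le> z" "u z = c"
    using IVT2[of u "max N x" c x] cont by (force simp: continuous_on_eq_continuous_at)
  have "bdd_above {y. u y = c}"
  proof (rule bdd_aboveI)
    show "y \<le> N" if "y \<in> {y. u y = c}" for y
      using that N[of y] by (cases "N \<le> y") auto
  qed
  then have "z \<le> Sup {y. u y = c}"
    using z by (simp add: cSup_upper)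
  with x z(1) have "z = x"
    by linarith
  with z(2) \<open>\<not> u x \<le> c\<close> show False
    by simp
qed

lemma powr_one_minus_ln_ge:
  fixes u a Q :: real
  assumes "0 < u" "u \<le> exp (1 - Q powr (1 / a))" "a > 0" "Q \<ge> 0"
  shows "Q \<le> (1 - ln u) powr a"
proof -
  have "Q powr (1 / a) \<le> 1 - ln u"
    using ln_mono[OF assms(2,1)] by simp
  then have "(Q powr (1 / a)) powr a \<le> (1 - ln u) powr a"
    using assms(3) by (intro powr_mono2) auto
  then show ?thesis
    using assms(3,4) by (simp add: powr_powr)
qed

lemma has_real_derivative_exp_one_minus_powr:
  fixes \<rho> \<alpha> P t :: real
  assumes \<alpha>: "\<alpha> + 1 > 0" and A: "P - \<rho> * (\<alpha> + 1) * t > 0"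
  defines "B \<equiv> (P - \<rho> * (\<alpha> + 1) * t) powr (1 / (\<alpha> + 1))"
  shows "((\<lambda>s. exp (1 - (P - \<rho> * (\<alpha> + 1) * s) powr (1 / (\<alpha> + 1))))
           has_real_derivative \<rho> * exp (1 - B) / B powr \<alpha>) (at t)"
proof -
  define A where "A = P - \<rho> * (\<alpha> + 1) * t"
  have "A powr (1 / (\<alpha> + 1) - 1) = A powr (- (\<alpha> / (\<alpha> + 1)))"
    using \<alpha> by (simp add: field_simps)
  also have "\<dots> = 1 / B powr \<alpha>"
    using A by (simp add: A_def B_def powr_powr powr_minus_divide)
  finally have exponent: "A powr (1 / (\<alpha> + 1) - 1) = 1 / B powr \<alpha>" .
  have "((\<lambda>s. (P - \<rho> * (\<alpha> + 1) * s) powr (1 / (\<alpha> + 1))) has_real_derivative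
          1 / (\<alpha> + 1) * A powr (1 / (\<alpha> + 1) - 1) * - (\<rho> * (\<alpha> + 1))) (at t)"
    using DERIV_fun_powr[of "\<lambda>s. P - \<rho> * (\<alpha> + 1) * s" "- (\<rho> * (\<alpha> + 1))" t] A
    by (auto simp: A_def intro!: derivative_eq_intros)
  then have "((\<lambda>s. (P - \<rho> * (\<alpha> + 1) * s) powr (1 / (\<alpha> + 1))) has_real_derivative
          - \<rho> / B powr \<alpha>) (at t)"
    using \<alpha> by (simp add: exponent)
  from DERIV_fun_exp[OF DERIV_diff[OF DERIV_const[of 1] this]] show ?thesis
    by (simp add: A_def B_def mult.commute)
qed

lemma reaction_le_log_bound:
  fixes f :: "real \<Rightarrow> real"
  assumes upper: "\<forall>s. 0 < s \<and> s < 1 \<longrightarrow> f s \<le> r * s / (1 + \<bar>ln s\<bar>) powr \<alpha>"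
    and "f 1 = 0" "r \<ge> 0" "0 < v" "v \<le> 1"
  shows "f v \<le> r * v / (1 - ln v) powr \<alpha>"
proof (cases "v = 1")
  case False
  then have "1 + \<bar>ln v\<bar> = 1 - ln v"
    using assms(4,5) by simp
  with upper assms(4,5) False show ?thesis by force
qed (use assms in simp)

lemma supersol_at_of_bounds:
  fixes g e :: real
  assumes "((\<lambda>s. v s x) has_real_derivative (r + e) * g) (at t)"
    and "has_second_deriv (\<lambda>y. v t y) vxx x" and "\<bar>vxx\<bar> < e * g"
    and "f (v t x) \<le> r * g"
  shows "supersol_at f v t x"
  unfolding supersol_at_def using assms by (intro exI conjI) (auto simp: algebra_simps)

theorem lemma3p3:
  fixes f :: "real \<Rightarrow> real" and u0 :: "real \<Rightarrow> real"
    and s0 K \<alpha> r \<xi>0 \<epsilon> \<rho> tsharp :: real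
    and \<phi>0 :: "real \<Rightarrow> real" and w m :: "real \<Rightarrow> real \<Rightarrow> real" and x0 :: "real \<Rightarrow> real"
  assumes f_C1: "\<exists>f'. continuous_on {0..1} f' \<and>
                   (\<forall>s\<in>{0..1}. (f has_real_derivative f' s) (at s within {0..1})) \<and> f' 1 < 0"
    and f0: "f 0 = 0" and f1: "f 1 = 0"
    and fpos: "\<forall>s. 0 < s \<and> s < 1 \<longrightarrow> f s > 0"
    and s0: "0 < s0" "s0 < 1" and K: "K \<ge> 0" and \<alpha>: "\<alpha> > 0" and r: "r > 0"
    and f_upper: "\<forall>s. 0 < s \<and> s < 1 \<longrightarrow> f s \<le> r * s / (1 + \<bar>ln s\<bar>) powr \<alpha>"
    and f_lower: "\<forall>s. 0 < s \<and> s \<le> s0 \<longrightarrow> f s \<ge> r * s / (1 + \<bar>ln s\<bar>) powr \<alpha> * (1 - K * s)"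
    and u0_uc: "uniformly_continuous_on UNIV u0"
    and u0_range: "\<forall>x. 0 < u0 x \<and> u0 x \<le> 1"
    and u0_liminf: "\<exists>c>0. \<forall>\<^sub>F x in at_bot. u0 x \<ge> c"
    and u0_lim: "(u0 \<longlongrightarrow> 0) at_top"
    and \<xi>0: "\<xi>0 > 0"
    and u0_C2: "\<exists>u1 u2. (\<forall>x\<ge>\<xi>0. (u0 has_real_derivative u1 x) (at x within {\<xi>0..}) \<and>
                                (u1 has_real_derivative u2 x) (at x within {\<xi>0..})) \<and>
                      continuous_on {\<xi>0..} u2"
    and u0_mono: "\<forall>x y. \<xi>0 \<le> x \<and> x \<le> y \<longrightarrow> u0 y \<le> u0 x"
    and \<phi>0_def: "\<phi>0 = (\<lambda>x. - ln (u0 x))"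
    and \<phi>0_d1: "deriv \<phi>0 \<in> o[at_top](\<lambda>x. \<phi>0 x powr (- \<alpha>))"
    and \<phi>0_d2: "deriv (deriv \<phi>0) \<in> o[at_top](deriv \<phi>0)"
    and \<epsilon>: "\<epsilon> > 0"
    and \<rho>_def: "\<rho> = r + \<epsilon> / 2"
    and w_def: "w = (\<lambda>t x. exp (1 - ((1 + \<phi>0 x) powr (\<alpha> + 1) - \<rho> * (\<alpha> + 1) * t) powr (1 / (\<alpha> + 1))))"
    and x0_def: "x0 = (\<lambda>t. Sup {x. u0 x = exp (1 - (\<rho> * (\<alpha> + 1) * t + 1) powr (1 / (\<alpha> + 1)))})"
    and tsharp: "tsharp > 0"
    and tsharp_prop: "\<forall>t\<ge>tsharp. \<forall>x\<ge>x0 t. \<exists>wxx. has_second_deriv (\<lambda>y. w t y) wxx x \<and>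
                        \<bar>wxx\<bar> < \<epsilon> / 2 * w t x / (1 - ln (w t x)) powr \<alpha>"
    and m_def: "m = (\<lambda>t x. if x \<ge> x0 (t + tsharp) then w (t + tsharp) x else 1)"
  shows "\<forall>t>0. \<forall>x.
           (x < x0 (t + tsharp) \<longrightarrow> m t x = 1 \<and> supersol_at f (\<lambda>s y. 1) t x) \<and>
           (x \<ge> x0 (t + tsharp) \<longrightarrow> m t x = w (t + tsharp) x \<and>
                                     supersol_at f (\<lambda>s y. w (s + tsharp) y) t x)"
proof (intro allI impI conjI)
  fix t x :: real
  assume "t > 0"
  define T where "T = t + tsharp"
  show "m t x = 1" if "x < x0 (t + tsharp)"
    using that m_def by simp
  show "supersol_at f (\<lambda>s y. 1) t x"
    by (rule supersol_at_const) (simp add: f1)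
  assume x: "x0 (t + tsharp) \<le> x"
  show "m t x = w (t + tsharp) x"
    using x m_def by simp
  have \<rho>: "\<rho> > 0" and T: "T > 0"
    using \<rho>_def r \<epsilon> \<open>t > 0\<close> tsharp T_def by auto
  define A where "A = (1 + \<phi>0 x) powr (\<alpha> + 1) - \<rho> * (\<alpha> + 1) * T"
  define B where "B = A powr (1 / (\<alpha> + 1))"
  have "u0 x \<le> exp (1 - (\<rho> * (\<alpha> + 1) * T + 1) powr (1 / (\<alpha> + 1)))"
    using le_level_beyond_Sup_level_set[OF uniformly_continuous_imp_continuous[OF u0_uc] u0_lim]
      x x0_def T_def by simp
  then have "A \<ge> 1"
    using powr_one_minus_ln_ge[of "u0 x" "\<rho> * (\<alpha> + 1) * T + 1" "\<alpha> + 1"] u0_range \<alpha> \<rho> T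
    by (simp add: A_def \<phi>0_def)
  then have "B \<ge> 1"
    using \<alpha> by (simp add: B_def ge_one_powr_ge_zero)
  have wTx: "w T x = exp (1 - B)" and lnw: "1 - ln (w T x) = B"
    by (simp_all add: w_def A_def B_def)
  have w_pos: "0 < w T x" and w_le_1: "w T x \<le> 1"
    using \<open>B \<ge> 1\<close> by (simp_all add: wTx)
  define g where "g = w T x / B powr \<alpha>"
  have "((\<lambda>s. w (s + tsharp) x) has_real_derivative (r + \<epsilon> / 2) * g) (at t)"
    using has_real_derivative_exp_one_minus_powr[of \<alpha> "(1 + \<phi>0 x) powr (\<alpha> + 1)" \<rho> T] \<alpha> \<open>A \<ge> 1\<close>
    by (simp add: DERIV_shift w_def wTx A_def B_def T_def g_def flip: \<rho>_def)
  moreover obtain wxx where "has_second_deriv (\<lambda>y. w T y) wxx x"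
    and "\<bar>wxx\<bar> < \<epsilon> / 2 * g"
    using tsharp_prop[rule_format, of T x] \<open>t > 0\<close> x lnw by (auto simp: T_def g_def)
  moreover have "f (w T x) \<le> r * g"
    using reaction_le_log_bound[OF f_upper f1 less_imp_le[OF r] w_pos w_le_1]
    by (simp only: lnw g_def times_divide_eq_right)
  ultimately show "supersol_at f (\<lambda>s y. w (s + tsharp) y) t x"
    unfolding T_def by (rule supersol_at_of_bounds)
qed

end
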